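(* There exist an absolute constant $c>0$ and an integer $N$ such that for every integer $n\geq N$ the following holds. Let $f:\mathbb{R}\to\mathbb{R}$ be the continuous function which equals $1$ on $[\frac{1}{n},1-\frac{1}{n}]$, equals $-1$ on $[-1+\frac{1}{n},-\frac{1}{n}]$, equals $0$ for $|t|\geq 1$, and is linear on each of the intervals $[-1,-1+\frac{1}{n}]$, $[-\frac{1}{n},\frac{1}{n}]$ and $[1-\frac{1}{n},1]$. Let $\phi_n(x)=c_n\left(1-\frac{x^2}{4}\right)^{n^2}$, with $c_n>0$ chosen so that $\int_{-2}^2\phi_n(x)\,dx=1$, and let $P_n(t)=\int_{-1}^1 f(x)\phi_n(t-x)\,dx$. Then $P_n$ is a polynomial of degree $d=2n^2-1$ and $$\bigg|\,\mathrm{p.v.}\int_{\mathbb{R}} e^{iP_n(t)}\frac{dt}{t}\bigg|\geq c\log d.$$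
   Context: The principal value integral is $\mathrm{p.v.}\int_{\mathbb{R}} e^{iP(t)}\frac{dt}{t}=\lim_{\epsilon\to 0^+,\,R\to\infty}\int_{\epsilon\leq |t|\leq R} e^{iP(t)}\frac{dt}{t}$. *)

theory Defs
  imports "HOL-Analysis.Analysis" "HOL-Computational_Algebra.Polynomial"
begin

definition f_fun :: "nat \<Rightarrow> real \<Rightarrow> real" where
  "f_fun n t =
     (if \<bar>t\<bar> \<ge> 1 then 0
      else if \<bar>t\<bar> \<le> 1 / real n then real n * t
      else if \<bar>t\<bar> \<le> 1 - 1 / real n then sgn t
      else sgn t * real n * (1 - \<bar>t\<bar>))"

definition c_const :: "nat \<Rightarrow> real" where
  "c_const n = 1 / integral {-2..2} (\<lambda>x. (1 - x\<^sup>2 / 4) ^ (n\<^sup>2))"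

definition phi :: "nat \<Rightarrow> real \<Rightarrow> real" where
  "phi n x = c_const n * (1 - x\<^sup>2 / 4) ^ (n\<^sup>2)"

definition P_fun :: "nat \<Rightarrow> real \<Rightarrow> real" where
  "P_fun n t = integral {-1..1} (\<lambda>x. f_fun n x * phi n (t - x))"

definition pv_has_value :: "(real \<Rightarrow> complex) \<Rightarrow> complex \<Rightarrow> bool" where
  "pv_has_value g L \<longleftrightarrow>
     ((\<lambda>(\<epsilon>, R). integral {t. \<epsilon> \<le> \<bar>t\<bar> \<and> \<bar>t\<bar> \<le> R} g) \<longlongrightarrow> L)
       (at_right 0 \<times>\<^sub>F at_top)"

end

theory Submission
  imports Defs
begin

text \<open>
  \<open>P\<^sub>n = f * \<phi>\<^sub>n\<close> is odd, so the principal value equals \<open>2 i \<integral>\<^sub>0\<^sup>\<infinity> sin P\<^sub>n(t) dt / t\<close>.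
  On \<open>[0, 1]\<close> we have \<open>0 \<le> P\<^sub>n \<le> 1\<close>, and since \<open>\<phi>\<^sub>n\<close> is concentrated at scale \<open>1/\<surd>n\<close>,
  \<open>P\<^sub>n \<ge> 1/2\<close> on \<open>[2/\<surd>n, 1/2]\<close>; hence \<open>\<integral>\<^sub>0\<^sup>1 sin P\<^sub>n(t) dt/t \<ge> sin(1/2) log(\<surd>n/4)\<close>.
  On \<open>[1, s]\<close>, \<open>s \<le> 5\<close>, the integral is at least \<open>-log 5\<close>. For \<open>t \<ge> 4\<close>, up to sign and a multiple of \<open>\<pi>\<close>,
  \<open>P\<^sub>n\<close> is a phase with derivative \<open>\<ge> n\<^sup>2/32\<close> and nonnegative second derivative; integrating by
  parts against \<open>1/(t P\<^sub>n')\<close> from a point where \<open>cos P\<^sub>n = 1\<close> shows that the remaining tail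
  integral is nonnegative. Finally \<open>P\<^sub>n\<close> is a polynomial of degree \<open>\<le> 2n\<^sup>2\<close>; its top coefficient
  vanishes because \<open>f\<close> is odd, and the next one is a nonzero multiple of \<open>\<integral> x f(x) dx\<close>.
\<close>

section \<open>The function \<open>f\<close>\<close>

definition ramp :: "real \<Rightarrow> real \<Rightarrow> real" where
  "ramp N u = max (min (min u 1) (N - u)) 0 + min (max (max u (-1)) (- N - u)) 0"

text \<open>The function \<open>f_fun\<close> in the variable \<open>u = n t\<close>, written with \<open>min\<close>/\<open>max\<close> so that
  continuity is automatic.\<close>
definition f_ramp :: "nat \<Rightarrow> real \<Rightarrow> real" where
  "f_ramp n t = ramp (real n) (real n * t)"

lemma ramp_minus: "ramp N (-u) = - ramp N u"
  unfolding ramp_def by (auto simp: max_def min_def)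

lemma abs_ramp_le_1: "N \<ge> 2 \<Longrightarrow> \<bar>ramp N u\<bar> \<le> 1"
  unfolding ramp_def by (auto simp: max_def min_def)

lemma ramp_nonneg: "N \<ge> 2 \<Longrightarrow> u \<ge> 0 \<Longrightarrow> ramp N u \<ge> 0"
  unfolding ramp_def by (auto simp: max_def min_def)

lemma ramp_eq_1: "N \<ge> 2 \<Longrightarrow> 1 \<le> u \<Longrightarrow> u \<le> N - 1 \<Longrightarrow> ramp N u = 1"
  unfolding ramp_def by (auto simp: max_def min_def)

lemma f_fun_eq_f_ramp:
  assumes "n \<ge> 2"
  shows "f_fun n t = f_ramp n t"
proof -
  define N where "N = real n"
  define u where "u = N * t"
  have N: "N \<ge> 2" using assms by (simp add: N_def)
  have "(\<bar>t\<bar> \<ge> 1) = (\<bar>u\<bar> \<ge> N)" "(\<bar>t\<bar> \<le> 1 / N) = (\<bar>u\<bar> \<le> 1)"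
    "(\<bar>t\<bar> \<le> 1 - 1 / N) = (\<bar>u\<bar> \<le> N - 1)"
    using N by (auto simp: u_def abs_mult field_simps)
  moreover have "sgn t = sgn u" "sgn t * N * (1 - \<bar>t\<bar>) = sgn u * (N - \<bar>u\<bar>)"
    using N by (simp_all add: u_def sgn_mult abs_mult algebra_simps)
  ultimately have "f_fun n t = (if \<bar>u\<bar> \<ge> N then 0 else if \<bar>u\<bar> \<le> 1 then u
      else if \<bar>u\<bar> \<le> N - 1 then sgn u else sgn u * (N - \<bar>u\<bar>))"
    unfolding f_fun_def N_def[symmetric] u_def[symmetric] by simp
  then show ?thesis
    using N unfolding f_ramp_def ramp_def N_def[symmetric] u_def[symmetric]
    by (auto simp: sgn_if abs_if max_def min_def)
qed

lemma continuous_on_f_ramp: "continuous_on S (f_ramp n)"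
  unfolding f_ramp_def ramp_def by (intro continuous_intros)

lemma f_ramp_minus: "f_ramp n (-t) = - f_ramp n t"
  unfolding f_ramp_def using ramp_minus by simp

lemma abs_f_ramp_le_1: "n \<ge> 2 \<Longrightarrow> \<bar>f_ramp n t\<bar> \<le> 1"
  unfolding f_ramp_def by (intro abs_ramp_le_1) auto

lemma f_ramp_nonneg: "n \<ge> 2 \<Longrightarrow> t \<ge> 0 \<Longrightarrow> f_ramp n t \<ge> 0"
  unfolding f_ramp_def by (intro ramp_nonneg) auto

lemma f_ramp_eq_1:
  assumes "n \<ge> 2" "1 / real n \<le> t" "t \<le> 1 - 1 / real n"
  shows "f_ramp n t = 1"
  unfolding f_ramp_def using assms by (intro ramp_eq_1) (auto simp: field_simps)

lemma f_ramp_eq_1_middle: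
  assumes "n \<ge> 4" "1/4 \<le> t" "t \<le> 3/4"
  shows "f_ramp n t = 1"
proof -
  have "1 / real n \<le> 1/4" using assms(1) by (simp add: field_simps)
  with assms show ?thesis by (intro f_ramp_eq_1) linarith+
qed

section \<open>Convolution with \<open>f\<close>\<close>

definition fconv :: "(real \<Rightarrow> real) \<Rightarrow> nat \<Rightarrow> real \<Rightarrow> real" where
  "fconv K n t = integral {-1..1} (\<lambda>x. f_ramp n x * K (t - x))"

lemma integrable_f_ramp_mult:
  assumes "continuous_on UNIV K"
  shows "(\<lambda>x. f_ramp n x * K (t - x)) integrable_on {a..b}"
  by (intro integrable_continuous_real continuous_intros continuous_on_f_ramp
      continuous_on_compose2[OF assms]) auto

lemma fconv_has_real_derivative:
  assumes K': "\<And>y. (K has_real_derivative K' y) (at y)" and "continuous_on UNIV K'"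
  shows "(fconv K n has_real_derivative fconv K' n t) (at t)"
proof -
  have "continuous_on UNIV K" using K' by (meson DERIV_continuous continuous_at_imp_continuous_on)
  have "continuous_on UNIV (\<lambda>p::real\<times>real. f_ramp n (snd p) * K' (fst p - snd p))"
    by (intro continuous_intros continuous_on_compose2[OF continuous_on_f_ramp]
        continuous_on_compose2[OF \<open>continuous_on UNIV K'\<close>]) auto
  then have "((\<lambda>t. integral (cbox (-1) 1) (\<lambda>x. f_ramp n x * K (t - x))) has_field_derivative
        integral (cbox (-1) 1) (\<lambda>x. f_ramp n x * K' (t - x))) (at t within UNIV)"
    by (intro leibniz_rule_field_derivative)
      (auto simp: split_def cbox_interval \<open>continuous_on UNIV K\<close> integrable_f_ramp_mult
        intro!: derivative_eq_intros K'[THEN DERIV_chain2] intro: continuous_on_subset)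
  then show ?thesis unfolding fconv_def cbox_interval by simp
qed

lemma integral_symmetric_interval:
  fixes F :: "real \<Rightarrow> real"
  assumes "continuous_on {-a..a} F" "a \<ge> 0"
  shows "integral {-a..a} F = integral {0..a} (\<lambda>x. F x + F (-x))"
proof -
  have F: "F integrable_on {-a..a}" using assms(1) by (rule integrable_continuous_real)
  then have F0: "F integrable_on {0..a}" "F integrable_on {-a..0}"
    using integrable_on_subinterval by fastforce+
  then have "(\<lambda>x. F (-x)) integrable_on {0..a}"
    using Henstock_Kurzweil_Integration.integrable_reflect_real[where f=F and a="-a" and b=0] by simp
  moreover have "integral {-a..a} F = integral {-a..0} F + integral {0..a} F"
    using Henstock_Kurzweil_Integration.integral_combine[OF _ _ F, of 0] assms(2) by simp
  moreover have "integral {-a..0} F = integral {0..a} (\<lambda>x. F (-x))"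
    using Henstock_Kurzweil_Integration.integral_reflect_real[of a 0 "\<lambda>x. F (-x)"] by simp
  ultimately show ?thesis using F0 by (simp add: integral_add)
qed

lemma fconv_eq_integral_0_1:
  assumes "continuous_on UNIV K"
  shows "fconv K n t = integral {0..1} (\<lambda>x. f_ramp n x * (K (t - x) - K (t + x)))"
proof -
  have "fconv K n t = integral {0..1} (\<lambda>x. f_ramp n x * K (t - x) + f_ramp n (-x) * K (t - - x))"
    unfolding fconv_def
    by (rule integral_symmetric_interval[where a=1, simplified])
      (intro continuous_intros continuous_on_f_ramp continuous_on_compose2[OF assms]; auto)
  then show ?thesis by (simp add: f_ramp_minus algebra_simps)
qed

lemma fconv_cmult: "fconv (\<lambda>y. c * K y) n t = c * fconv K n t"
  unfolding fconv_def by (simp add: mult.left_commute)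

lemma integral_reflect_shift_real:
  "integral {-a..a} (\<lambda>x. K (t - x)) = integral {t-a..t+a} (K :: real \<Rightarrow> real)"
proof -
  have "integral {-a..a} (\<lambda>x. K (t - x)) = integral {-a..a} (K \<circ> (+) t)"
    using Henstock_Kurzweil_Integration.integral_reflect_real[of a "-a" "\<lambda>x. K (t + x)"] by (simp add: o_def)
  also have "\<dots> = integral {-a+t..a+t} K" by (rule integral_shift_Icc_real)
  finally show ?thesis by (simp add: algebra_simps)
qed

section \<open>The kernel\<close>

text \<open>Up to the factor \<open>(-1)^m c\<^sub>n\<close> this is \<open>\<phi>\<^sub>n\<close>; on \<open>[2, \<infinity>)\<close> it and its derivatives are
  nonnegative and increasing.\<close>
definition psi :: "nat \<Rightarrow> real \<Rightarrow> real" where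
  "psi m y = (y^2/4 - 1)^m"

definition psi_d1 :: "nat \<Rightarrow> real \<Rightarrow> real" where
  "psi_d1 m y = real m * (y^2/4 - 1)^(m-1) * (y/2)"

definition psi_d2 :: "nat \<Rightarrow> real \<Rightarrow> real" where
  "psi_d2 m y = real m * real (m-1) * (y^2/4 - 1)^(m-2) * (y/2)^2 + real m * (y^2/4 - 1)^(m-1) / 2"

definition psi_d3 :: "nat \<Rightarrow> real \<Rightarrow> real" where
  "psi_d3 m y = real m * real (m-1) * (real (m-2) * (y^2/4 - 1)^(m-3) * (y/2)) * (y/2)^2
     + real m * real (m-1) * (y^2/4 - 1)^(m-2) * (y/2)
     + real m * (real (m-1) * (y^2/4 - 1)^(m-2) * (y/2)) / 2"

lemma psi_has_real_derivative:
  assumes "m \<ge> 1"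
  shows "(psi m has_real_derivative psi_d1 m y) (at y)"
proof -
  have "((\<lambda>y. (y^2/4 - 1)^m) has_real_derivative real m * (y^2/4 - 1)^(m-1) * (2 * y / 4)) (at y)"
    by (auto intro!: derivative_eq_intros)
  then show ?thesis unfolding psi_def psi_d1_def by (simp add: field_simps)
qed

lemma psi_d1_has_real_derivative:
  assumes "m \<ge> 2"
  shows "(psi_d1 m has_real_derivative psi_d2 m y) (at y)"
proof -
  have "((\<lambda>y. real m * (y^2/4 - 1)^(m-1) * (y/2)) has_real_derivative
     real m * (real (m-1) * (y^2/4 - 1)^(m-1-1) * (2 * y / 4)) * (y/2)
       + real m * (y^2/4 - 1)^(m-1) * (1/2)) (at y)"
    by (auto intro!: derivative_eq_intros)
  moreover have "m - 1 - 1 = m - 2" by simp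
  ultimately show ?thesis unfolding psi_d1_def psi_d2_def by (simp add: field_simps power2_eq_square)
qed

lemma psi_d2_has_real_derivative:
  assumes "m \<ge> 3"
  shows "(psi_d2 m has_real_derivative psi_d3 m y) (at y)"
proof -
  have "((\<lambda>y. real m * real (m-1) * (y^2/4 - 1)^(m-2) * (y/2)^2 + real m * (y^2/4 - 1)^(m-1) / 2)
     has_real_derivative
     real m * real (m-1) * (real (m-2) * (y^2/4 - 1)^(m-2-1) * (2 * y / 4)) * (y/2)^2
      + real m * real (m-1) * (y^2/4 - 1)^(m-2) * (2 * (y/2) * (1/2))
      + real m * (real (m-1) * (y^2/4 - 1)^(m-1-1) * (2 * y / 4)) / 2) (at y)"
    by (auto intro!: derivative_eq_intros simp: algebra_simps)
  moreover have "m - 2 - 1 = m - 3" "m - 1 - 1 = m - 2" by auto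
  ultimately show ?thesis
    unfolding psi_d2_def psi_d3_def by (simp add: algebra_simps)
qed

lemma continuous_on_psi:
  "continuous_on S (psi m)" "continuous_on S (psi_d1 m)" "continuous_on S (psi_d2 m)"
  "continuous_on S (psi_d3 m)"
  unfolding psi_def psi_d1_def psi_d2_def psi_d3_def by (auto intro!: continuous_intros)

lemma phi_eq_psi: "phi n y = c_const n * (-1)^(n^2) * psi (n^2) y"
proof -
  have "(1 - y^2/4)^(n^2) = ((-1) * (y^2/4 - 1))^(n^2)" by simp
  then show ?thesis unfolding phi_def psi_def power_mult_distrib by simp
qed

lemma continuous_on_phi: "continuous_on S (phi n)"
  unfolding phi_def by (auto intro!: continuous_intros)

lemma integrable_phi: "phi n integrable_on {a..b}"
  by (intro integrable_continuous_real continuous_on_phi)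

lemma phi_minus: "phi n (-y) = phi n y"
  unfolding phi_def by simp

lemma one_minus_quarter_square_nonneg: "\<bar>y\<bar> \<le> 2 \<Longrightarrow> 0 \<le> 1 - (y::real)^2/4"
  using abs_le_square_iff[of y 2] by simp

lemma one_minus_quarter_square_antimono: "\<bar>y\<bar> \<le> \<bar>z\<bar> \<Longrightarrow> 1 - (z::real)^2/4 \<le> 1 - y^2/4"
  using abs_le_square_iff[of y z] by simp

definition bump_integral :: "nat \<Rightarrow> real" where
  "bump_integral n = integral {-2..2} (\<lambda>x. (1 - x\<^sup>2 / 4) ^ (n\<^sup>2))"

lemma bump_integral_le_4: "bump_integral n \<le> 4"
proof -
  have "bump_integral n \<le> integral {-2..2::real} (\<lambda>x. 1)"
    unfolding bump_integral_def
  proof (rule integral_le)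
    fix x :: real assume "x \<in> {-2..2}"
    then have "0 \<le> 1 - x^2/4" by (intro one_minus_quarter_square_nonneg) auto
    then show "(1 - x\<^sup>2 / 4) ^ n\<^sup>2 \<le> 1" by (simp add: power_le_one)
  qed (auto intro!: integrable_continuous_real continuous_intros)
  then show ?thesis by simp
qed

lemma bump_integral_ge:
  assumes "n \<ge> 2"
  shows "bump_integral n \<ge> 3 / (2 * real n)"
proof -
  let ?g = "\<lambda>x::real. (1 - x\<^sup>2 / 4) ^ n\<^sup>2"
  have n: "real n \<ge> 2" using assms by simp
  have g: "?g integrable_on {a..b}" for a b
    by (auto intro!: integrable_continuous_real continuous_intros)
  have "integral {-1/real n..1/real n} (\<lambda>x. 3/4) \<le> integral {-1/real n..1/real n} ?g"
  proof (rule integral_le)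
    fix x assume "x \<in> {-1/real n..1/real n}"
    then have "\<bar>x\<bar> * real n \<le> 1" using n by (auto simp: abs_le_iff field_simps)
    then have "(\<bar>x\<bar> * real n)^2 \<le> 1" by (intro power_le_one) auto
    then have x2: "real (n^2) * x^2 \<le> 1" by (simp add: power_mult_distrib mult.commute)
    moreover have "x^2 \<le> real (n^2) * x^2" using mult_right_mono[of 1 "real (n^2)" "x^2"] assms by simp
    ultimately have "1 + real (n^2) * (-(x^2/4)) \<le> ?g x"
      using Bernoulli_inequality[of "-(x^2/4)" "n^2"] by simp
    then show "3/4 \<le> ?g x" using x2 by simp
  qed (auto intro: g)
  also have "\<dots> \<le> bump_integral n"
    unfolding bump_integral_def
  proof (rule integral_subset_le)
    have "1 / real n \<le> 2" using n by (simp add: divide_le_eq)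
    then show "{- 1 / real n..1 / real n} \<subseteq> {- 2..2}" by auto
  qed (use one_minus_quarter_square_nonneg in \<open>auto intro: g\<close>)
  finally show ?thesis using n by (simp add: field_simps)
qed

lemma c_const_bounds:
  assumes "n \<ge> 2"
  shows "c_const n \<ge> 1/4" "c_const n \<le> 2 * real n / 3" "c_const n > 0"
proof -
  have l: "bump_integral n \<ge> 3 / (2 * real n)" using bump_integral_ge[OF assms] .
  moreover have "3 / (2 * real n) > 0" using assms by simp
  ultimately have p: "bump_integral n > 0" by linarith
  have c: "c_const n = 1 / bump_integral n" unfolding c_const_def bump_integral_def ..
  show "c_const n \<ge> 1/4" unfolding c using bump_integral_le_4[of n] p by (simp add: field_simps)
  show "c_const n > 0" unfolding c using p by simp
  have "1 / bump_integral n \<le> 1 / (3 / (2 * real n))"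
    using l assms p by (intro divide_left_mono) auto
  then show "c_const n \<le> 2 * real n / 3" unfolding c by simp
qed

lemma integral_phi:
  assumes "n \<ge> 2"
  shows "integral {-2..2} (phi n) = 1"
proof -
  have "integral {-2..2} (phi n) = c_const n * bump_integral n"
    unfolding phi_def bump_integral_def by simp
  then show ?thesis
    using c_const_bounds(3)[OF assms] unfolding c_const_def bump_integral_def[symmetric] by simp
qed

lemma phi_nonneg:
  assumes "n \<ge> 2" "\<bar>y\<bar> \<le> 2"
  shows "phi n y \<ge> 0"
  unfolding phi_def
  using c_const_bounds(3)[OF assms(1)] one_minus_quarter_square_nonneg[OF assms(2)] by simp

lemma phi_antimono:
  assumes "n \<ge> 2" "\<bar>y\<bar> \<le> \<bar>z\<bar>" "\<bar>z\<bar> \<le> 2"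
  shows "phi n z \<le> phi n y"
  unfolding phi_def using c_const_bounds[OF assms(1)] assms
  by (intro mult_left_mono power_mono one_minus_quarter_square_antimono
      one_minus_quarter_square_nonneg) auto

definition dphi :: "nat \<Rightarrow> real \<Rightarrow> real" where
  "dphi n y = c_const n * real (n^2) * (1 - y^2/4)^(n^2 - 1) * (- y / 2)"

lemma phi_has_real_derivative:
  assumes "n \<ge> 1"
  shows "(phi n has_real_derivative dphi n y) (at y)"
proof -
  have "((\<lambda>y. c_const n * (1 - y^2/4)^(n^2)) has_real_derivative
     c_const n * (real (n^2) * (1 - y^2/4)^(n^2 - 1) * (- (2 * y / 4)))) (at y)"
    by (auto intro!: derivative_eq_intros)
  then show ?thesis unfolding phi_def dphi_def by (simp add: field_simps)
qed

lemma continuous_on_dphi: "continuous_on S (dphi n)"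
  unfolding dphi_def by (auto intro!: continuous_intros)

lemma abs_dphi_le:
  assumes "n \<ge> 2" "\<bar>y\<bar> \<le> 2"
  shows "\<bar>dphi n y\<bar> \<le> c_const n * real (n^2)"
proof -
  have b: "0 \<le> 1 - y^2/4" using one_minus_quarter_square_nonneg[OF assms(2)] .
  have c: "c_const n > 0" using c_const_bounds(3)[OF assms(1)] .
  have "\<bar>dphi n y\<bar> = c_const n * real (n^2) * ((1 - y^2/4)^(n^2 - 1) * \<bar>- y / 2\<bar>)"
    unfolding dphi_def using c b by (simp add: abs_mult)
  also have "\<dots> \<le> c_const n * real (n^2) * (1 * 1)"
    using b c assms(2) by (intro mult_left_mono mult_mono power_le_one) auto
  finally show ?thesis by simp
qed

section \<open>\<open>P\<^sub>n\<close> near the origin\<close>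

lemma P_fun_eq_fconv: "n \<ge> 2 \<Longrightarrow> P_fun n = fconv (phi n) n"
  unfolding P_fun_def fconv_def by (auto simp: f_fun_eq_f_ramp)

lemma P_fun_eq_fconv_psi:
  "n \<ge> 2 \<Longrightarrow> P_fun n t = c_const n * (-1)^(n^2) * fconv (psi (n^2)) n t"
  unfolding P_fun_eq_fconv phi_eq_psi fconv_cmult ..

lemma P_fun_eq_integral_0_1:
  "n \<ge> 2 \<Longrightarrow> P_fun n t = integral {0..1} (\<lambda>x. f_ramp n x * (phi n (t - x) - phi n (t + x)))"
  unfolding P_fun_eq_fconv by (rule fconv_eq_integral_0_1[OF continuous_on_phi])

lemma P_fun_minus:
  assumes "n \<ge> 2"
  shows "P_fun n (-t) = - P_fun n t"
proof -
  have "phi n (- t - x) = phi n (t + x)" "phi n (- t + x) = phi n (t - x)" for x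
    using phi_minus[of n "t + x"] phi_minus[of n "t - x"] by (simp_all add: algebra_simps)
  then show ?thesis
    unfolding P_fun_eq_integral_0_1[OF assms]
    by (simp add: algebra_simps flip: integral_neg)
qed

lemma P_fun_has_real_derivative:
  "n \<ge> 2 \<Longrightarrow> (P_fun n has_real_derivative fconv (dphi n) n t) (at t)"
  unfolding P_fun_eq_fconv
  by (intro fconv_has_real_derivative phi_has_real_derivative continuous_on_dphi) auto

lemma continuous_on_P_fun: "n \<ge> 2 \<Longrightarrow> continuous_on S (P_fun n)"
  using P_fun_has_real_derivative by (meson DERIV_continuous continuous_at_imp_continuous_on)

lemma P_fun_nonneg:
  assumes "n \<ge> 2" "0 \<le> t" "t \<le> 1"
  shows "P_fun n t \<ge> 0"
  unfolding P_fun_eq_integral_0_1[OF assms(1)]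
proof (rule integral_nonneg)
  show "(\<lambda>x. f_ramp n x * (phi n (t - x) - phi n (t + x))) integrable_on {0..1}"
    by (intro integrable_continuous_real continuous_intros continuous_on_f_ramp
        continuous_on_compose2[OF continuous_on_phi]) auto
  fix x :: real assume x: "x \<in> {0..1}"
  then have "phi n (t + x) \<le> phi n (t - x)" using assms by (intro phi_antimono) auto
  then show "0 \<le> f_ramp n x * (phi n (t - x) - phi n (t + x))"
    using f_ramp_nonneg[OF assms(1), of x] x by simp
qed

lemma P_fun_le_1:
  assumes "n \<ge> 2" "0 \<le> t" "t \<le> 1"
  shows "P_fun n t \<le> 1"
proof -
  have "P_fun n t \<le> integral {-1..1} (\<lambda>x. phi n (t - x))"
    unfolding P_fun_eq_fconv[OF assms(1)] fconv_def
  proof (rule integral_le)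
    fix x :: real assume "x \<in> {-1..1}"
    then have "phi n (t - x) \<ge> 0" using assms by (intro phi_nonneg) auto
    then show "f_ramp n x * phi n (t - x) \<le> phi n (t - x)"
      using abs_f_ramp_le_1[OF assms(1), of x] mult_right_mono[of "f_ramp n x" 1] by simp
  next
    show "(\<lambda>x. phi n (t - x)) integrable_on {-1..1}"
      by (intro integrable_continuous_real continuous_intros
          continuous_on_compose2[OF continuous_on_phi]) auto
  qed (rule integrable_f_ramp_mult[OF continuous_on_phi])
  also have "\<dots> = integral {t-1..t+1} (phi n)" by (rule integral_reflect_shift_real)
  also have "\<dots> \<le> integral {-2..2} (phi n)"
    using assms by (intro integral_subset_le integrable_phi) (auto intro!: phi_nonneg)
  also have "\<dots> = 1" by (rule integral_phi[OF assms(1)])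
  finally show ?thesis .
qed

lemma eight_mul_le_exp_quarter:
  fixes x :: real
  assumes "x \<ge> 512"
  shows "8 * x \<le> exp (x / 4)"
proof -
  have "x / 8 \<le> exp (x / 8)" using exp_ge_add_one_self[of "x / 8"] by linarith
  then have "(x / 8)^2 \<le> exp (x / 8)^2" using assms by (intro power_mono) auto
  moreover have "exp (x / 4) = exp (x / 8)^2" by (simp flip: exp_add add: power2_eq_square)
  moreover have "8 * x \<le> (x / 8)^2" using assms by (simp add: power2_eq_square field_simps)
  ultimately show ?thesis by linarith
qed

lemma phi_le_off_centre:
  assumes "n \<ge> 1000" "1 / sqrt (real n) \<le> \<bar>y\<bar>" "\<bar>y\<bar> \<le> 2"
  shows "phi n y \<le> 1/12"
proof -
  have n: "real n \<ge> 1000" using assms(1) by simp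
  have "(1 - 1 / (real n * 4))^(n^2) \<le> exp (- (1 / (real n * 4)))^(n^2)"
    using exp_ge_add_one_self[of "- (1 / (real n * 4))"] n by (intro power_mono) auto
  also have "\<dots> = exp (- real n / 4)"
    unfolding exp_of_nat_mult[symmetric] using n by (simp add: power2_eq_square field_simps)
  finally have e: "(1 - 1 / (real n * 4))^(n^2) \<le> exp (- real n / 4)" .
  have "(1 / sqrt (real n))^2 / 4 = 1 / (real n * 4)" using n by (simp add: power_divide)
  then have "phi n (1 / sqrt (real n)) \<le> (2 * real n / 3) * exp (- real n / 4)"
    unfolding phi_def using c_const_bounds[of n] assms(1) e n by (intro mult_mono) auto
  also have "\<dots> \<le> 1/12"
    using eight_mul_le_exp_quarter[of "real n"] n by (simp add: exp_minus field_simps)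
  finally have "phi n (1 / sqrt (real n)) \<le> 1/12" .
  moreover have "phi n y \<le> phi n (1 / sqrt (real n))"
    using assms by (intro phi_antimono) auto
  ultimately show ?thesis by linarith
qed

lemma integral_phi_window_ge:
  assumes "n \<ge> 1000" "0 \<le> t" "t \<le> 1/2"
  shows "integral {t-1..t+1} (phi n) \<ge> 5/6"
proof -
  have sqrt: "1 / sqrt (real n) \<le> 1/2"
    using assms(1) real_sqrt_le_mono[of 4 "real n"] by (simp add: divide_le_eq)
  have small: "phi n y \<le> 1/12" if "1/2 \<le> \<bar>y\<bar>" "\<bar>y\<bar> \<le> 2" for y
    using that sqrt by (intro phi_le_off_centre[OF assms(1)]) auto
  have "integral {-2..t-1} (phi n) + integral {t-1..2} (phi n) = integral {-2..2} (phi n)"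
    "integral {t-1..t+1} (phi n) + integral {t+1..2} (phi n) = integral {t-1..2} (phi n)"
    using assms by (intro Henstock_Kurzweil_Integration.integral_combine integrable_phi; simp)+
  moreover have "integral {-2..t-1} (phi n) \<le> integral {-2..t-1} (\<lambda>x. 1/12)"
    using assms by (intro integral_le integrable_phi small) auto
  moreover have "integral {t+1..2} (phi n) \<le> integral {t+1..2} (\<lambda>x. 1/12)"
    using assms by (intro integral_le integrable_phi small) auto
  ultimately show ?thesis using assms integral_phi[of n] by simp
qed

lemma P_fun_ge_half:
  assumes "n \<ge> 1000" "2 / sqrt (real n) \<le> t" "t \<le> 1/2"
  shows "P_fun n t \<ge> 1/2"
proof -
  define d where "d = 1 / sqrt (real n)"
  have n: "n \<ge> 2" "real n \<ge> 1000" using assms(1) by auto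
  have d: "d > 0" "1 / real n \<le> d" "2 * d \<le> t"
    using n assms(2) real_sqrt_le_mono[of "real n" "real n ^ 2"]
    by (auto simp: d_def field_simps power2_eq_square)
  then have "0 \<le> t" by linarith
  \<comment> \<open>f = 1 within distance d of t, and phi is at most 1/12 elsewhere on [-2, 2]\<close>
  have "phi n (t - x) - 1/6 \<le> f_ramp n x * phi n (t - x)" if x: "x \<in> {-1..1}" for x
  proof (cases "\<bar>t - x\<bar> \<le> d")
    case True
    then have "f_ramp n x = 1" using d \<open>0 \<le> t\<close> assms(3) by (intro f_ramp_eq_1[OF n(1)]) auto
    then show ?thesis by simp
  next
    case False
    have "\<bar>t - x\<bar> \<le> 2" using x \<open>0 \<le> t\<close> assms(3) by (auto simp: abs_le_iff)
    then have "phi n (t - x) \<le> 1/12" using False assms(1) by (intro phi_le_off_centre) (auto simp: d_def)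
    moreover have "phi n (t - x) \<ge> 0" using \<open>\<bar>t - x\<bar> \<le> 2\<close> by (intro phi_nonneg[OF n(1)])
    moreover have "\<bar>f_ramp n x * phi n (t - x)\<bar> \<le> phi n (t - x)"
      using abs_f_ramp_le_1[OF n(1), of x] \<open>phi n (t - x) \<ge> 0\<close>
      by (simp add: abs_mult mult_left_le_one_le)
    ultimately show ?thesis by linarith
  qed
  then have "integral {-1..1} (\<lambda>x. phi n (t - x) - 1/6) \<le> P_fun n t"
    unfolding P_fun_eq_fconv[OF n(1)] fconv_def
    by (intro integral_le integrable_f_ramp_mult[OF continuous_on_phi]
        integrable_continuous_real continuous_intros continuous_on_compose2[OF continuous_on_phi]) auto
  moreover have "integral {-1..1} (\<lambda>x. phi n (t - x) - 1/6) = integral {t-1..t+1} (phi n) - 1/3"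
  proof -
    have "integral {-1..1} (\<lambda>x. phi n (t - x) - 1/6) = integral {t-1..t+1} (\<lambda>y. phi n y - 1/6)"
      by (rule integral_reflect_shift_real)
    also have "\<dots> = integral {t-1..t+1} (phi n) - 1/3"
      by (subst integral_diff) (auto intro: integrable_phi)
    finally show ?thesis .
  qed
  moreover have "integral {t-1..t+1} (phi n) \<ge> 5/6"
    using d assms by (intro integral_phi_window_ge) auto
  ultimately show ?thesis by linarith
qed

lemma P_fun_le_linear:
  assumes "n \<ge> 2" "0 \<le> t" "t \<le> 1"
  shows "P_fun n t \<le> 2 * c_const n * real (n^2) * t"
proof -
  let ?C = "c_const n * real (n^2)"
  have bound: "fconv (dphi n) n s \<le> 2 * ?C" if "0 \<le> s" "s \<le> 1" for s
  proof -
    have "fconv (dphi n) n s \<le> integral {-1..1::real} (\<lambda>x. ?C)"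
      unfolding fconv_def
    proof (rule integral_le)
      fix x :: real assume "x \<in> {-1..1}"
      then have "\<bar>dphi n (s - x)\<bar> \<le> ?C" using that by (intro abs_dphi_le[OF assms(1)]) auto
      then have "\<bar>f_ramp n x\<bar> * \<bar>dphi n (s - x)\<bar> \<le> 1 * ?C"
        using abs_f_ramp_le_1[OF assms(1), of x] by (intro mult_mono) auto
      then show "f_ramp n x * dphi n (s - x) \<le> ?C" by (metis abs_le_D1 abs_mult mult_1)
    qed (auto intro: integrable_f_ramp_mult[OF continuous_on_dphi])
    then show ?thesis by simp
  qed
  have "(\<lambda>s. 2 * ?C * s - P_fun n s) 0 \<le> (\<lambda>s. 2 * ?C * s - P_fun n s) t"
  proof (rule DERIV_nonneg_imp_nondecreasing[OF assms(2)])
    fix s assume "0 \<le> s" "s \<le> t"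
    then have "((\<lambda>s. 2 * ?C * s - P_fun n s) has_real_derivative 2 * ?C - fconv (dphi n) n s) (at s)
        \<and> 0 \<le> 2 * ?C - fconv (dphi n) n s"
      using bound assms
      by (auto intro!: derivative_eq_intros P_fun_has_real_derivative[OF assms(1)])
    then show "\<exists>y. ((\<lambda>s. 2 * ?C * s - P_fun n s) has_real_derivative y) (at s) \<and> 0 \<le> y" ..
  qed
  moreover have "P_fun n 0 = 0" using P_fun_minus[OF assms(1), of 0] by simp
  ultimately show ?thesis by (simp add: mult.assoc)
qed

section \<open>\<open>P\<^sub>n\<close> for large \<open>t\<close>\<close>

lemma quarter_square_minus_1_mono:
  assumes "2 \<le> a" "a \<le> b"
  shows "0 \<le> a^2/4 - 1" "a^2/4 - 1 \<le> b^2/4 - (1::real)"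
proof -
  have "2^2 \<le> a^2" "a^2 \<le> b^2" using assms by (intro power_mono; simp)+
  then show "0 \<le> a^2/4 - 1" "a^2/4 - 1 \<le> b^2/4 - (1::real)" by simp_all
qed

lemma psi_d1_mono:
  assumes "2 \<le> a" "a \<le> b"
  shows "psi_d1 m a \<le> psi_d1 m b"
proof -
  note q = quarter_square_minus_1_mono[OF assms]
  have "0 \<le> b^2/4 - 1" using q by linarith
  then have qb: "0 \<le> (b^2/4 - 1)^(m-1)" by simp
  have "(a^2/4 - 1)^(m-1) * (a/2) \<le> (b^2/4 - 1)^(m-1) * (b/2)"
    using q assms by (intro mult_mono power_mono qb) auto
  then show ?thesis unfolding psi_d1_def by (simp add: mult.assoc mult_left_mono)
qed

lemma psi_d2_mono:
  assumes "2 \<le> a" "a \<le> b"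
  shows "psi_d2 m a \<le> psi_d2 m b"
proof -
  note q = quarter_square_minus_1_mono[OF assms]
  have "0 \<le> b^2/4 - 1" using q by linarith
  then have qb: "0 \<le> (b^2/4 - 1)^(m-2)" by simp
  have "(a^2/4 - 1)^(m-2) * (a/2)^2 \<le> (b^2/4 - 1)^(m-2) * (b/2)^2"
    using q assms by (intro mult_mono power_mono qb) auto
  then have "real m * real (m-1) * ((a^2/4 - 1)^(m-2) * (a/2)^2)
      \<le> real m * real (m-1) * ((b^2/4 - 1)^(m-2) * (b/2)^2)"
    by (intro mult_left_mono) auto
  moreover have "real m * (a^2/4 - 1)^(m-1) / 2 \<le> real m * (b^2/4 - 1)^(m-1) / 2"
    using q by (intro divide_right_mono mult_left_mono power_mono) auto
  ultimately show ?thesis unfolding psi_d2_def by (simp add: mult.assoc)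
qed

lemma psi_d1_step:
  assumes "3 \<le> a"
  shows "psi_d1 m a + real m / 2 \<le> psi_d1 m (a + 1)"
proof -
  note q = quarter_square_minus_1_mono[of a "a + 1"]
  have "3^2 \<le> a^2" using assms by (intro power_mono) auto
  then have "1 \<le> (a^2/4 - 1)^(m-1)" by (simp add: one_le_power)
  then have "real m / 2 \<le> real m * (a^2/4 - 1)^(m-1) / 2"
    by (simp add: divide_right_mono mult_le_cancel_left1)
  also have "psi_d1 m a + \<dots> = real m * (a^2/4 - 1)^(m-1) * ((a+1)/2)"
    unfolding psi_d1_def by (simp add: field_simps)
  also have "\<dots> \<le> psi_d1 m (a + 1)"
    unfolding psi_d1_def using q assms by (intro mult_right_mono mult_left_mono power_mono) auto
  finally show ?thesis by simp
qed

lemma fconv_psi_d1_le: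
  assumes n: "n \<ge> 4" and t: "t \<ge> 4"
  shows "fconv (psi_d1 (n^2)) n t \<le> - real (n^2) / 8"
proof -
  have n2: "n \<ge> 2" using n by simp
  define F where "F x = f_ramp n x * (psi_d1 (n^2) (t + x) - psi_d1 (n^2) (t - x))" for x
  have F: "F integrable_on {a..b}" for a b unfolding F_def
    by (intro integrable_continuous_real continuous_intros continuous_on_f_ramp
        continuous_on_compose2[OF continuous_on_psi(2)]) auto
  have "integral {1/2..3/4::real} (\<lambda>x. real (n^2) / 2) \<le> integral {1/2..3/4} F"
  proof (rule integral_le)
    fix x :: real assume x: "x \<in> {1/2..3/4}"
    have "psi_d1 (n^2) (t - x) + real (n^2) / 2 \<le> psi_d1 (n^2) ((t - x) + 1)"
      using x t by (intro psi_d1_step) auto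
    moreover have "psi_d1 (n^2) ((t - x) + 1) \<le> psi_d1 (n^2) (t + x)"
      using x t by (intro psi_d1_mono) auto
    ultimately show "real (n^2) / 2 \<le> F x"
      unfolding F_def using x by (simp add: f_ramp_eq_1_middle[OF n])
  qed (auto intro: F)
  also have "\<dots> \<le> integral {0..1} F"
  proof (rule integral_subset_le)
    show "\<forall>x\<in>{0..1}. 0 \<le> F x"
    proof
      fix x :: real assume x: "x \<in> {0..1}"
      have "psi_d1 (n^2) (t - x) \<le> psi_d1 (n^2) (t + x)" using x t by (intro psi_d1_mono) auto
      then show "0 \<le> F x" unfolding F_def using f_ramp_nonneg[OF n2, of x] x by simp
    qed
  qed (auto intro: F)
  moreover have "fconv (psi_d1 (n^2)) n t = - integral {0..1} F"
    unfolding fconv_eq_integral_0_1[OF continuous_on_psi(2)] F_def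
    by (simp add: algebra_simps flip: integral_neg)
  ultimately show ?thesis by simp
qed

lemma fconv_psi_d2_nonpos:
  assumes n: "n \<ge> 2" and t: "t \<ge> 4"
  shows "fconv (psi_d2 (n^2)) n t \<le> 0"
proof -
  have "integral {0..1} (\<lambda>x. f_ramp n x * (psi_d2 (n\<^sup>2) (t - x) - psi_d2 (n\<^sup>2) (t + x)))
      \<le> integral {0..1::real} (\<lambda>x. 0)"
  proof (rule integral_le)
    show "(\<lambda>x. f_ramp n x * (psi_d2 (n\<^sup>2) (t - x) - psi_d2 (n\<^sup>2) (t + x))) integrable_on {0..1}"
      by (intro integrable_continuous_real continuous_intros continuous_on_f_ramp
          continuous_on_compose2[OF continuous_on_psi(3)]) auto
    fix x :: real assume x: "x \<in> {0..1}"
    then have "psi_d2 (n^2) (t - x) \<le> psi_d2 (n^2) (t + x)" using t by (intro psi_d2_mono) auto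
    then show "f_ramp n x * (psi_d2 (n\<^sup>2) (t - x) - psi_d2 (n\<^sup>2) (t + x)) \<le> 0"
      using f_ramp_nonneg[OF n, of x] x by (simp add: mult_nonneg_nonpos)
  qed auto
  then show ?thesis unfolding fconv_eq_integral_0_1[OF continuous_on_psi(3)] by simp
qed

section \<open>Oscillatory integrals\<close>

lemma integral_tendsto_at_top_if_nonneg_bounded:
  fixes w :: "real \<Rightarrow> real"
  assumes w: "continuous_on {s..} w" "\<And>t. s \<le> t \<Longrightarrow> 0 \<le> w t"
    and bounded: "\<And>R. s \<le> R \<Longrightarrow> integral {s..R} w \<le> B"
  shows "\<exists>l \<ge> 0. ((\<lambda>R. integral {s..R} w) \<longlongrightarrow> l) at_top"
proof -
  define W where "W R = integral {s..R} w" for R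
  have iw: "w integrable_on {a..b}" if "s \<le> a" for a b
    using continuous_on_subset[OF w(1), of "{a..b}"] that by (intro integrable_continuous_real) auto
  have mono: "W x \<le> W y" if "s \<le> x" "x \<le> y" for x y
  proof -
    have "W y = W x + integral {x..y} w"
      unfolding W_def using that iw[of s y]
      by (intro Henstock_Kurzweil_Integration.integral_combine[symmetric]) auto
    moreover have "integral {x..y} w \<ge> 0" using that by (intro integral_nonneg iw w(2)) auto
    ultimately show ?thesis by simp
  qed
  have bdd: "bdd_above (W ` {s..})" using bounded by (intro bdd_aboveI2[where M=B]) (auto simp: W_def)
  have "(W \<longlongrightarrow> (SUP x\<in>{s..}. W x)) at_top"
  proof (rule increasing_tendsto)
    show "\<forall>\<^sub>F x in at_top. W x \<le> (SUP x\<in>{s..}. W x)"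
      using eventually_ge_at_top[of s] by eventually_elim (auto intro: cSUP_upper bdd)
    fix l assume "l < (SUP x\<in>{s..}. W x)"
    then obtain y where y: "y \<in> {s..}" "l < W y" using less_cSUP_iff[of "{s..}" W l] bdd by auto
    show "\<forall>\<^sub>F x in at_top. l < W x"
      using eventually_ge_at_top[of y] by eventually_elim (use mono y in fastforce)
  qed
  moreover have "W s \<le> (SUP x\<in>{s..}. W x)" by (intro cSUP_upper bdd) auto
  ultimately show ?thesis unfolding W_def by auto
qed

lemma integral_sin_phase_by_parts:
  fixes Q dQ H dH :: "real \<Rightarrow> real"
  assumes "s \<le> R"
    and Q: "\<And>t. t \<in> {s..R} \<Longrightarrow> (Q has_real_derivative dQ t) (at t)"
    and H: "\<And>t. t \<in> {s..R} \<Longrightarrow> (H has_real_derivative dH t) (at t)"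
    and "continuous_on {s..R} dH" and "cos (Q s) = 1"
  shows "integral {s..R} (\<lambda>t. sin (Q t) * dQ t * H t)
       = (1 - cos (Q R)) * H R + integral {s..R} (\<lambda>t. (cos (Q t) - 1) * dH t)"
proof -
  define F where "F t = (1 - cos (Q t)) * H t" for t
  define w where "w t = (cos (Q t) - 1) * dH t" for t
  have "continuous_on {s..R} Q"
    using Q by (intro continuous_at_imp_continuous_on ballI DERIV_continuous)
  then have "w integrable_on {s..R}"
    unfolding w_def using assms(4)
    by (intro integrable_continuous_real continuous_intros continuous_on_compose2[OF continuous_on_cos]) auto
  moreover have "((\<lambda>t. sin (Q t) * dQ t * H t - w t) has_integral F R - F s) {s..R}"
  proof (intro fundamental_theorem_of_calculus[OF assms(1)])
    fix t assume "t \<in> {s..R}"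
    then have "(F has_real_derivative sin (Q t) * dQ t * H t - w t) (at t)"
      unfolding F_def w_def using Q H by (auto intro!: derivative_eq_intros simp: algebra_simps)
    then show "(F has_vector_derivative sin (Q t) * dQ t * H t - w t) (at t within {s..R})"
      by (simp add: has_real_derivative_iff_has_vector_derivative[symmetric] has_field_derivative_at_within)
  qed
  ultimately have "((\<lambda>t. (sin (Q t) * dQ t * H t - w t) + w t) has_integral F R - F s + integral {s..R} w) {s..R}"
    by (intro has_integral_add) auto
  then show ?thesis using assms(5) unfolding F_def w_def by (simp add: integral_unique)
qed

lemma integral_cos_phase_decreasing_weight_tendsto:
  fixes Q H dH :: "real \<Rightarrow> real"
  assumes cont_Q: "continuous_on {s..} Q" and cont_dH: "continuous_on {s..} dH"
    and dH: "\<And>t. t \<ge> s \<Longrightarrow> (H has_real_derivative dH t) (at t)"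
    and dH_nonpos: "\<And>t. t \<ge> s \<Longrightarrow> dH t \<le> 0" and H_nonneg: "\<And>t. t \<ge> s \<Longrightarrow> H t \<ge> 0"
  shows "\<exists>W \<ge> 0. ((\<lambda>R. integral {s..R} (\<lambda>t. (cos (Q t) - 1) * dH t)) \<longlongrightarrow> W) at_top"
  proof (rule integral_tendsto_at_top_if_nonneg_bounded[where B="2 * H s"])
    show "continuous_on {s..} (\<lambda>t. (cos (Q t) - 1) * dH t)"
      by (intro continuous_intros cont_dH continuous_on_compose2[OF continuous_on_cos cont_Q]) auto
    show "0 \<le> (cos (Q t) - 1) * dH t" if "s \<le> t" for t
      using dH_nonpos[OF that] by (intro mult_nonpos_nonpos) auto
    fix R assume "s \<le> R"
    have cos_Q: "-2 \<le> cos (Q t) - 1" for t using cos_ge_minus_one[of "Q t"] by linarith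
    have "integral {s..R} (\<lambda>t. (cos (Q t) - 1) * dH t) \<le> integral {s..R} (\<lambda>t. -2 * dH t)"
      using dH_nonpos \<open>s \<le> R\<close> cos_Q
      by (intro integral_le integrable_continuous_real continuous_intros cont_dH
          continuous_on_compose2[OF continuous_on_cos] mult_right_mono_neg
          continuous_on_subset[OF cont_Q] continuous_on_subset[OF cont_dH]) auto
    also have "\<dots> = -2 * (H R - H s)"
      using \<open>s \<le> R\<close> dH
      by (intro integral_unique has_integral_mult_right fundamental_theorem_of_calculus)
        (auto simp: has_real_derivative_iff_has_vector_derivative[symmetric] intro: DERIV_subset)
    also have "\<dots> \<le> 2 * H s" using H_nonneg[OF \<open>s \<le> R\<close>] by simp
    finally show "integral {s..R} (\<lambda>t. (cos (Q t) - 1) * dH t) \<le> 2 * H s" .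
  qed

lemma one_minus_cos_mult_tendsto_0:
  fixes Q H :: "real \<Rightarrow> real"
  assumes "k > 0" and H: "\<And>t. t \<ge> s \<Longrightarrow> 0 \<le> H t" "\<And>t. t \<ge> s \<Longrightarrow> H t \<le> inverse (t * k)"
  shows "((\<lambda>R. (1 - cos (Q R)) * H R) \<longlongrightarrow> 0) at_top"
proof (rule tendsto_sandwich[of "\<lambda>_. 0" _ _ "\<lambda>R. 2 * inverse (R * k)"])
  have bounds: "0 \<le> (1 - cos (Q R)) * H R \<and> (1 - cos (Q R)) * H R \<le> 2 * inverse (R * k)"
    if "s \<le> R" for R
  proof -
    have "0 \<le> 1 - cos (Q R)" "1 - cos (Q R) \<le> 2"
      using cos_le_one[of "Q R"] cos_ge_minus_one[of "Q R"] by linarith+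
    then show ?thesis using H[OF that] by (auto intro: mult_mono order.trans[OF _ H(2)[OF that]])
  qed
  show "\<forall>\<^sub>F R in at_top. 0 \<le> (1 - cos (Q R)) * H R"
    "\<forall>\<^sub>F R in at_top. (1 - cos (Q R)) * H R \<le> 2 * inverse (R * k)"
    using eventually_ge_at_top[of s] by (eventually_elim, use bounds in blast)+
  have "((\<lambda>R. inverse (R * k)) \<longlongrightarrow> 0) at_top"
    using \<open>k > 0\<close> by (intro tendsto_inverse_0_at_top
        filterlim_at_top_mult_tendsto_pos[OF tendsto_const _ filterlim_ident]) auto
  from tendsto_mult[OF tendsto_const this, of 2]
  show "((\<lambda>R. 2 * inverse (R * k)) \<longlongrightarrow> 0) at_top" by simp
qed auto

text \<open>Integrating by parts against \<open>1/(t Q')\<close>: the boundary term tends to \<open>0\<close>, and as \<open>1/(t Q')\<close>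
  decreases the remaining integrand \<open>(cos Q - 1) (1/(t Q'))'\<close> is nonnegative with bounded integral.\<close>
lemma integral_sin_phase_over_t_tendsto_nonneg:
  fixes Q dQ dQ2 :: "real \<Rightarrow> real"
  assumes s: "s > 0"
    and d1: "\<And>t. t \<ge> s \<Longrightarrow> (Q has_real_derivative dQ t) (at t)"
    and d2: "\<And>t. t \<ge> s \<Longrightarrow> (dQ has_real_derivative dQ2 t) (at t)"
    and "continuous_on {s..} dQ2"
    and k: "k > 0" "\<And>t. t \<ge> s \<Longrightarrow> dQ t \<ge> k"
    and convex: "\<And>t. t \<ge> s \<Longrightarrow> dQ2 t \<ge> 0"
    and "cos (Q s) = 1"
  shows "\<exists>B \<ge> 0. ((\<lambda>R. integral {s..R} (\<lambda>t. sin (Q t) / t)) \<longlongrightarrow> B) at_top"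
proof -
  define H where "H t = inverse (t * dQ t)" for t
  define dH where "dH t = - ((1 * dQ t + dQ2 t * t) * inverse ((t * dQ t) ^ Suc (Suc 0)))" for t
  have pos: "t * dQ t > 0" if "t \<ge> s" for t using that s k by (smt (verit) mult_pos_pos)
  have H_pos: "0 < H t" if "t \<ge> s" for t
    unfolding H_def by (rule positive_imp_inverse_positive[OF pos[OF that]])
  have H_le: "H t \<le> inverse (t * k)" if "t \<ge> s" for t
    unfolding H_def using pos[OF that] k that s by (intro le_imp_inverse_le mult_left_mono) auto
  have dH: "(H has_real_derivative dH t) (at t)" if "t \<ge> s" for t
    unfolding H_def dH_def using pos[OF that]
    by (intro DERIV_inverse_fun DERIV_mult DERIV_ident d2[OF that]) auto
  have dH_nonpos: "dH t \<le> 0" if "t \<ge> s" for t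
    unfolding dH_def using pos[OF that] k(2)[OF that] convex[OF that] that s k(1)
    by (auto intro!: mult_nonneg_nonneg)
  have "continuous_on {s..} dQ"
    using d2 by (intro continuous_at_imp_continuous_on ballI DERIV_continuous) auto
  then have cont_dH: "continuous_on {s..} dH"
    unfolding dH_def using pos s by (intro continuous_intros assms(4)) fastforce+
  have cont_Q: "continuous_on {s..} Q"
    using d1 by (intro continuous_at_imp_continuous_on) (auto intro: DERIV_continuous)
  have "\<exists>W \<ge> 0. ((\<lambda>R. integral {s..R} (\<lambda>t. (cos (Q t) - 1) * dH t)) \<longlongrightarrow> W) at_top"
    using cont_Q cont_dH dH dH_nonpos H_pos
    by (intro integral_cos_phase_decreasing_weight_tendsto) (auto intro: less_imp_le)
  then obtain W where "W \<ge> 0"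
    and W: "((\<lambda>R. integral {s..R} (\<lambda>t. (cos (Q t) - 1) * dH t)) \<longlongrightarrow> W) at_top"
    by blast
  have boundary: "((\<lambda>R. (1 - cos (Q R)) * H R) \<longlongrightarrow> 0) at_top"
    using k(1) H_pos H_le by (intro one_minus_cos_mult_tendsto_0) (auto intro: less_imp_le)
  have "\<forall>\<^sub>F R in at_top. (1 - cos (Q R)) * H R + integral {s..R} (\<lambda>t. (cos (Q t) - 1) * dH t)
      = integral {s..R} (\<lambda>t. sin (Q t) / t)"
    using eventually_ge_at_top[of s]
  proof eventually_elim
    case (elim R)
    have "sin (Q t) / t = sin (Q t) * dQ t * H t" if "t \<in> {s..R}" for t
      using pos[of t] that s unfolding H_def by (auto simp: field_simps zero_less_mult_iff)
    then have "integral {s..R} (\<lambda>t. sin (Q t) / t) = integral {s..R} (\<lambda>t. sin (Q t) * dQ t * H t)"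
      by (rule integral_cong)
    moreover have "integral {s..R} (\<lambda>t. sin (Q t) * dQ t * H t)
        = (1 - cos (Q R)) * H R + integral {s..R} (\<lambda>t. (cos (Q t) - 1) * dH t)"
      using elim d1 dH assms(8)
      by (intro integral_sin_phase_by_parts continuous_on_subset[OF cont_dH]) auto
    ultimately show ?case by simp
  qed
  then have "((\<lambda>R. integral {s..R} (\<lambda>t. sin (Q t) / t)) \<longlongrightarrow> 0 + W) at_top"
    by (rule Lim_transform_eventually[OF tendsto_add[OF boundary W]])
  with \<open>W \<ge> 0\<close> show ?thesis by auto
qed

lemma cos_eq_1_if_phase_increases:
  fixes Q :: "real \<Rightarrow> real"
  assumes "a \<le> b" "continuous_on {a..b} Q" "Q a + 2 * pi \<le> Q b"
  shows "\<exists>s\<in>{a..b}. cos (Q s) = 1"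
proof -
  define j where "j = \<lceil>Q a / (2 * pi)\<rceil>"
  have "Q a / (2 * pi) \<le> of_int j" "of_int j < Q a / (2 * pi) + 1"
    unfolding j_def by linarith+
  then have "Q a \<le> 2 * pi * of_int j" "2 * pi * of_int j \<le> Q b"
    using assms(3) by (simp_all add: field_simps)
  then obtain s where "s \<in> {a..b}" "Q s = 2 * pi * of_int j"
    using IVT'[of Q a "2 * pi * of_int j" b] assms(1,2) by auto
  then show ?thesis by (intro bexI[of _ s]) auto
qed

lemma integral_tendsto_at_right_0_if_nonneg_bounded:
  fixes h :: "real \<Rightarrow> real"
  assumes "0 < b" and h: "\<And>a. 0 < a \<Longrightarrow> h integrable_on {a..b}"
    and nonneg: "\<And>t. 0 < t \<Longrightarrow> t \<le> b \<Longrightarrow> 0 \<le> h t" and bounded: "\<And>t. 0 < t \<Longrightarrow> t \<le> b \<Longrightarrow> h t \<le> M"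
  shows "\<exists>A. ((\<lambda>e. integral {e..b} h) \<longlongrightarrow> A) (at_right 0) \<and> (\<forall>e\<in>{0<..b}. integral {e..b} h \<le> A)"
proof -
  define V where "V e = integral {e..b} h" for e
  have antimono: "V y \<le> V x" if "0 < x" "x \<le> y" "y \<le> b" for x y
  proof -
    have "V x = integral {x..y} h + V y"
      unfolding V_def using that h[of x]
      by (intro Henstock_Kurzweil_Integration.integral_combine[symmetric]) auto
    moreover have "integral {x..y} h \<ge> 0"
      using that integrable_on_subinterval[OF h[of x], of x y]
      by (intro integral_nonneg nonneg) auto
    ultimately show ?thesis by simp
  qed
  have "0 \<le> M" using nonneg[of b] bounded[of b] \<open>0 < b\<close> by linarith
  have "V x \<le> M * b" if "0 < x" "x \<le> b" for x
  proof -
    have "V x \<le> integral {x..b} (\<lambda>t. M)" unfolding V_def using that by (intro integral_le h bounded) auto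
    also have "\<dots> \<le> M * b" using that \<open>0 \<le> M\<close> by (simp add: mult_left_mono mult.commute)
    finally show ?thesis .
  qed
  then have bdd: "bdd_above (V ` {0<..b})" by (intro bdd_aboveI2[where M="M * b"]) auto
  define A where "A = (SUP x\<in>{0<..b}. V x)"
  have upper: "\<forall>e\<in>{0<..b}. V e \<le> A" unfolding A_def using bdd by (auto intro: cSUP_upper)
  have "(V \<longlongrightarrow> A) (at_right 0)"
  proof (rule increasing_tendsto)
    have "\<forall>z>0. z < b \<longrightarrow> V z \<le> A" using upper by auto
    then show "\<forall>\<^sub>F x in at_right 0. V x \<le> A"
      unfolding eventually_at_right_field using \<open>0 < b\<close> by (intro exI[of _ b]) simp
    fix l assume "l < A"
    then obtain y where y: "y \<in> {0<..b}" "l < V y"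
      using less_cSUP_iff[of "{0<..b}" V l, OF _ bdd] \<open>0 < b\<close> unfolding A_def by auto
    have "\<forall>z>0. z < y \<longrightarrow> l < V z"
    proof (intro allI impI)
      fix z :: real assume "0 < z" "z < y"
      then have "V y \<le> V z" using y by (intro antimono) auto
      then show "l < V z" using y by simp
    qed
    then show "\<forall>\<^sub>F x in at_right 0. l < V x"
      unfolding eventually_at_right_field using y by (intro exI[of _ y]) simp
  qed
  with upper show ?thesis unfolding V_def by blast
qed

section \<open>The integral of \<open>sin P\<^sub>n(t) / t\<close>\<close>

lemma integral_sin_P_over_t_tail_tendsto:
  assumes "n \<ge> 20"
  shows "\<exists>s\<in>{4..5}. \<exists>B \<ge> 0. ((\<lambda>R. integral {s..R} (\<lambda>t. sin (P_fun n t) / t)) \<longlongrightarrow> B) at_top"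
proof -
  define m where "m = n^2"
  define c where "c = c_const n"
  have n: "n \<ge> 2" "n \<ge> 4" using assms by auto
  have m: "m \<ge> 400" unfolding m_def using power_mono[of 20 n 2] assms by simp
  have c: "c \<ge> 1/4" unfolding c_def using c_const_bounds[OF n(1)] by simp
  \<comment> \<open>\<open>Q\<close> is \<open>P\<close> or \<open>\<pi> - P\<close>, so \<open>sin Q = sin P\<close>, and is increasing and convex on \<open>[4, \<infinity>)\<close>\<close>
  define Q where "Q t = (if even m then pi else 0) - c * fconv (psi m) n t" for t
  define dQ where "dQ t = - c * fconv (psi_d1 m) n t" for t
  define dQ2 where "dQ2 t = - c * fconv (psi_d2 m) n t" for t
  have sin_Q: "sin (Q t) = sin (P_fun n t)" for t
    unfolding Q_def P_fun_eq_fconv_psi[OF n(1)] c_def m_def by auto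
  have dQ: "(Q has_real_derivative dQ t) (at t)" for t
    unfolding Q_def dQ_def using m
    by (auto intro!: derivative_eq_intros fconv_has_real_derivative psi_has_real_derivative
        continuous_on_psi)
  have dQ2: "(dQ has_real_derivative dQ2 t) (at t)" for t
    unfolding dQ_def dQ2_def using m
    by (auto intro!: derivative_eq_intros fconv_has_real_derivative psi_d1_has_real_derivative
        continuous_on_psi)
  have "(dQ2 has_real_derivative - c * fconv (psi_d3 m) n t) (at t)" for t
    unfolding dQ2_def using m
    by (auto intro!: derivative_eq_intros fconv_has_real_derivative psi_d2_has_real_derivative
        continuous_on_psi)
  then have "continuous_on {s..} dQ2" for s
    by (meson DERIV_continuous continuous_at_imp_continuous_on)
  define k where "k = real m / 32"
  have slope: "k \<le> dQ t" if "t \<ge> 4" for t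
  proof -
    have "(1/4) * (real m / 8) \<le> c * (- fconv (psi_d1 m) n t)"
      using fconv_psi_d1_le[OF n(2) that] c unfolding m_def by (intro mult_mono) auto
    then show ?thesis unfolding dQ_def k_def by simp
  qed
  have convex: "0 \<le> dQ2 t" if "t \<ge> 4" for t
    unfolding dQ2_def using fconv_psi_d2_nonpos[OF n(1) that] c
    unfolding m_def by (simp add: mult_nonneg_nonpos)
  have "Q 4 - k * 4 \<le> Q 5 - k * 5"
    using slope dQ
    by (intro DERIV_nonneg_imp_nondecreasing[of 4 5 "\<lambda>t. Q t - k * t"] exI conjI
        derivative_eq_intros) auto
  moreover have "2 * pi \<le> k" unfolding k_def using m pi_less_4 by simp
  moreover have "continuous_on {4..5} Q"
    using dQ by (intro continuous_at_imp_continuous_on) (auto intro: DERIV_continuous)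
  ultimately obtain s where s: "s \<in> {4..5}" "cos (Q s) = 1"
    using cos_eq_1_if_phase_increases[of 4 5 Q] by auto
  then have "\<exists>B \<ge> 0. ((\<lambda>R. integral {s..R} (\<lambda>t. sin (Q t) / t)) \<longlongrightarrow> B) at_top"
    using dQ dQ2 slope convex \<open>continuous_on {s..} dQ2\<close> m
    by (intro integral_sin_phase_over_t_tendsto_nonneg[where k=k]) (auto simp: k_def)
  then show ?thesis using s(1) unfolding sin_Q by blast
qed

lemma integrable_sin_P_over_t:
  assumes "n \<ge> 2" "0 < a"
  shows "(\<lambda>t. sin (P_fun n t) / t) integrable_on {a..b}"
  using assms
  by (intro integrable_continuous_real continuous_intros
      continuous_on_compose2[OF continuous_on_sin continuous_on_P_fun]) auto

lemma integral_inverse_real: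
  fixes a b :: real
  assumes "0 < a" "a \<le> b"
  shows "integral {a..b} (\<lambda>t. 1 / t) = ln b - ln a"
proof (rule integral_unique, rule fundamental_theorem_of_calculus[OF assms(2)])
  fix x assume "x \<in> {a..b}"
  then have "(ln has_real_derivative 1 / x) (at x)" using assms by (auto intro!: derivative_eq_intros)
  then show "(ln has_vector_derivative 1 / x) (at x within {a..b})"
    by (simp add: has_real_derivative_iff_has_vector_derivative[symmetric] has_field_derivative_at_within)
qed

lemma integral_sin_P_over_t_tendsto_at_top:
  assumes "n \<ge> 20"
  shows "\<exists>B \<ge> - ln 5. ((\<lambda>R. integral {1..R} (\<lambda>t. sin (P_fun n t) / t)) \<longlongrightarrow> B) at_top"
proof -
  let ?h = "\<lambda>t. sin (P_fun n t) / t"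
  have n: "n \<ge> 2" using assms by simp
  obtain s B where s: "4 \<le> s" "s \<le> 5" and "B \<ge> 0"
    and B: "((\<lambda>R. integral {s..R} ?h) \<longlongrightarrow> B) at_top"
    using integral_sin_P_over_t_tail_tendsto[OF assms] by auto
  have "\<forall>\<^sub>F R in at_top. integral {1..s} ?h + integral {s..R} ?h = integral {1..R} ?h"
    using eventually_ge_at_top[of s]
  proof eventually_elim
    case (elim R)
    show ?case using s elim
      by (intro Henstock_Kurzweil_Integration.integral_combine integrable_sin_P_over_t[OF n]) auto
  qed
  then have "((\<lambda>R. integral {1..R} ?h) \<longlongrightarrow> integral {1..s} ?h + B) at_top"
    by (rule Lim_transform_eventually[OF tendsto_add[OF tendsto_const B]])
  moreover have "- integral {1..s} ?h \<le> ln 5"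
  proof -
    have "- integral {1..s} ?h = integral {1..s} (\<lambda>t. - ?h t)" by (simp flip: integral_neg)
    also have "\<dots> \<le> integral {1..s} (\<lambda>t. 1 / t)"
    proof (rule integral_le)
      fix t :: real assume "t \<in> {1..s}"
      moreover have "- sin (P_fun n t) \<le> 1" using sin_ge_minus_one[of "P_fun n t"] by linarith
      ultimately have "- sin (P_fun n t) / t \<le> 1 / t" by (intro divide_right_mono) auto
      then show "- ?h t \<le> 1 / t" by simp
    next
      show "(\<lambda>t. 1 / t) integrable_on {1..s}"
        by (intro integrable_continuous_real continuous_intros) auto
    qed (use integrable_sin_P_over_t[OF n] in \<open>auto intro: integrable_neg\<close>)
    also have "\<dots> = ln s" using integral_inverse_real[of 1 s] s by simp
    also have "\<dots> \<le> ln 5" using s by simp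
    finally show ?thesis .
  qed
  ultimately show ?thesis using \<open>B \<ge> 0\<close> by (intro exI[of _ "integral {1..s} ?h + B"]) auto
qed

lemma integral_sin_P_over_t_tendsto_at_right_0:
  assumes "n \<ge> 1000"
  shows "\<exists>A \<ge> sin (1/2) * (ln (1/2) - ln (2 / sqrt (real n))).
           ((\<lambda>e. integral {e..1} (\<lambda>t. sin (P_fun n t) / t)) \<longlongrightarrow> A) (at_right 0)"
proof -
  let ?h = "\<lambda>t. sin (P_fun n t) / t"
  have n: "n \<ge> 2" using assms by simp
  have nonneg: "0 \<le> ?h t" if "0 < t" "t \<le> 1" for t
    using that P_fun_nonneg[OF n, of t] P_fun_le_1[OF n, of t] pi_gt3
    by (intro divide_nonneg_nonneg sin_ge_zero) auto
  have bounded: "?h t \<le> 2 * c_const n * real (n^2)" if "0 < t" "t \<le> 1" for t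
    using that sin_x_le_x[OF P_fun_nonneg[OF n, of t]] P_fun_le_linear[OF n, of t]
    by (simp add: divide_le_eq mult.commute)
  obtain A where A: "((\<lambda>e. integral {e..1} ?h) \<longlongrightarrow> A) (at_right 0)"
    and upper: "\<forall>e\<in>{0<..1}. integral {e..1} ?h \<le> A"
    using integral_tendsto_at_right_0_if_nonneg_bounded[OF zero_less_one
        integrable_sin_P_over_t[OF n] nonneg bounded] by auto
  define d where "d = 2 / sqrt (real n)"
  have d: "0 < d" "d \<le> 1/4"
    using assms real_sqrt_le_mono[of 64 "real n"] by (auto simp: d_def divide_le_eq)
  have "sin (1/2) * (ln (1/2) - ln d) = sin (1/2) * integral {d..1/2} (\<lambda>t. 1 / t)"
    using d integral_inverse_real[of d "1/2"] by simp
  also have "\<dots> = integral {d..1/2} (\<lambda>t. sin (1/2) * (1 / t))"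
    by (rule Henstock_Kurzweil_Integration.integral_mult_right[symmetric])
  also have "\<dots> \<le> integral {d..1/2} ?h"
  proof (rule integral_le)
    fix t assume t: "t \<in> {d..1/2}"
    then have "1/2 \<le> P_fun n t" using P_fun_ge_half[OF assms] by (simp add: d_def)
    moreover have "P_fun n t \<le> 1" using t d by (intro P_fun_le_1[OF n]) auto
    ultimately have "sin (1/2) \<le> sin (P_fun n t)" using pi_gt3 by (intro sin_monotone_2pi_le) auto
    then show "sin (1/2) * (1 / t) \<le> ?h t" using t d by (simp add: divide_right_mono)
  next
    show "(\<lambda>t. sin (1/2) * (1 / t)) integrable_on {d..1/2}"
      using d by (intro integrable_continuous_real continuous_intros) auto
  qed (use d in \<open>auto intro: integrable_sin_P_over_t[OF n]\<close>)
  also have "\<dots> \<le> integral {d..1/2} ?h + integral {1/2..1} ?h"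
    using nonneg by (intro add_increasing2 integral_nonneg integrable_sin_P_over_t[OF n]) auto
  also have "\<dots> = integral {d..1} ?h"
    using d by (intro Henstock_Kurzweil_Integration.integral_combine integrable_sin_P_over_t[OF n]) auto
  also have "\<dots> \<le> A" using upper d by auto
  finally show ?thesis using A unfolding d_def by blast
qed

section \<open>The principal value\<close>

lemma integral_pv_region_odd_phase:
  fixes P :: "real \<Rightarrow> real"
  assumes P: "continuous_on UNIV P" "\<And>t. P (-t) = - P t" and "0 < e" "e \<le> R"
  shows "integral {t. e \<le> \<bar>t\<bar> \<and> \<bar>t\<bar> \<le> R} (\<lambda>t. exp (\<i> * complex_of_real (P t)) / complex_of_real t)
       = 2 * \<i> * complex_of_real (integral {e..R} (\<lambda>t. sin (P t) / t))"
proof -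
  define g where "g t = exp (\<i> * complex_of_real (P t)) / complex_of_real t" for t
  have g_cont: "continuous_on {e..R} g" "continuous_on {e..R} (\<lambda>t. g (-t))"
    unfolding g_def P(2) using \<open>0 < e\<close>
    by (auto intro!: continuous_intros continuous_on_compose2[OF continuous_on_of_real]
        continuous_on_subset[OF P(1)])
  then have g_int: "g integrable_on {e..R}" "(\<lambda>t. g (-t)) integrable_on {e..R}"
    by (auto intro: integrable_continuous_real)
  have "{t. e \<le> \<bar>t\<bar> \<and> \<bar>t\<bar> \<le> R} = {-R..-e} \<union> {e..R}" using \<open>0 < e\<close> by auto
  moreover have "negligible ({-R..-e} \<inter> {e..R})" using \<open>0 < e\<close> by (simp add: Int_commute)
  moreover have "g integrable_on {-R..-e}"
    using g_int(2) Henstock_Kurzweil_Integration.integrable_reflect_real[where f="\<lambda>t. g (-t)" and a=e and b=R]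
    by simp
  ultimately have "integral {t. e \<le> \<bar>t\<bar> \<and> \<bar>t\<bar> \<le> R} g = integral {-R..-e} g + integral {e..R} g"
    using g_int(1) by (simp add: Henstock_Kurzweil_Integration.integral_Un)
  also have "\<dots> = integral {e..R} (\<lambda>t. g (-t) + g t)"
    using Henstock_Kurzweil_Integration.integral_reflect_real[where f="\<lambda>t. g (-t)" and a=e and b=R]
      g_int by (simp add: integral_add)
  also have "\<dots> = integral {e..R} (\<lambda>t. 2 * \<i> * complex_of_real (sin (P t) / t))"
  proof (rule integral_cong)
    fix t assume "t \<in> {e..R}"
    then have "t \<noteq> 0" using \<open>0 < e\<close> by auto
    then have "g (- t) + g t
        = (exp (\<i> * complex_of_real (P t)) - exp (- (\<i> * complex_of_real (P t)))) / complex_of_real t"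
      unfolding g_def P(2) by (simp add: field_simps)
    also have "exp (\<i> * complex_of_real (P t)) - exp (- (\<i> * complex_of_real (P t)))
        = 2 * \<i> * complex_of_real (sin (P t))"
      using sin_exp_eq[of "complex_of_real (P t)"] by (simp add: sin_of_real field_simps)
    finally show "g (- t) + g t = 2 * \<i> * complex_of_real (sin (P t) / t)" by simp
  qed
  also have "\<dots> = 2 * \<i> * complex_of_real (integral {e..R} (\<lambda>t. sin (P t) / t))"
  proof -
    have "continuous_on {e..R} (\<lambda>t. sin (P t) / t)"
      using \<open>0 < e\<close>
      by (auto intro!: continuous_intros continuous_on_compose2[OF continuous_on_sin]
          continuous_on_subset[OF P(1)])
    then show ?thesis
      by (intro integral_unique has_integral_mult_right has_integral_of_real
          integrable_integral integrable_continuous_real)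
  qed
  finally show ?thesis unfolding g_def .
qed

lemma pv_has_value_odd_phase:
  fixes P :: "real \<Rightarrow> real"
  assumes P: "continuous_on UNIV P" "\<And>t. P (-t) = - P t"
    and A: "((\<lambda>e. integral {e..1} (\<lambda>t. sin (P t) / t)) \<longlongrightarrow> A) (at_right 0)"
    and B: "((\<lambda>R. integral {1..R} (\<lambda>t. sin (P t) / t)) \<longlongrightarrow> B) at_top"
  shows "pv_has_value (\<lambda>t. exp (\<i> * complex_of_real (P t)) / complex_of_real t) (2 * \<i> * complex_of_real (A + B))"
proof -
  let ?h = "\<lambda>t. sin (P t) / t"
  let ?F = "at_right (0::real) \<times>\<^sub>F (at_top :: real filter)"
  have "filterlim fst (at_right 0) ?F" "filterlim snd at_top ?F"
    unfolding filterlim_def by (simp_all add: filtermap_fst_prod_filter filtermap_snd_prod_filter)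
  then have "((\<lambda>p. 2 * \<i> * complex_of_real (integral {fst p..1} ?h + integral {1..snd p} ?h))
      \<longlongrightarrow> 2 * \<i> * complex_of_real (A + B)) ?F"
    by (intro tendsto_intros filterlim_compose[OF A] filterlim_compose[OF B])
  moreover have "\<forall>\<^sub>F e in at_right (0::real). 0 < e \<and> e \<le> 1"
    unfolding eventually_at_right_field by (intro exI[of _ 1]) auto
  then have "\<forall>\<^sub>F p in ?F. 0 < fst p \<and> fst p \<le> 1 \<and> 1 \<le> snd p"
    by (rule eventually_mono[OF eventually_prodI[OF _ eventually_ge_at_top[of "1::real"]]]) auto
  then have "\<forall>\<^sub>F p in ?F. 2 * \<i> * complex_of_real (integral {fst p..1} ?h + integral {1..snd p} ?h)
      = (\<lambda>(e, R). integral {t. e \<le> \<bar>t\<bar> \<and> \<bar>t\<bar> \<le> R} (\<lambda>t. exp (\<i> * complex_of_real (P t)) / complex_of_real t)) p"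
  proof (rule eventually_mono)
    fix p :: "real \<times> real" assume p: "0 < fst p \<and> fst p \<le> 1 \<and> 1 \<le> snd p"
    have "continuous_on {fst p..snd p} ?h"
      using p by (auto intro!: continuous_intros continuous_on_compose2[OF continuous_on_sin]
          continuous_on_subset[OF P(1)])
    then have "integral {fst p..1} ?h + integral {1..snd p} ?h = integral {fst p..snd p} ?h"
      using p by (intro Henstock_Kurzweil_Integration.integral_combine integrable_continuous_real) auto
    then show "2 * \<i> * complex_of_real (integral {fst p..1} ?h + integral {1..snd p} ?h)
      = (\<lambda>(e, R). integral {t. e \<le> \<bar>t\<bar> \<and> \<bar>t\<bar> \<le> R} (\<lambda>t. exp (\<i> * complex_of_real (P t)) / complex_of_real t)) p"
      using p integral_pv_region_odd_phase[OF P, of "fst p" "snd p"] by (simp add: case_prod_beta)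
  qed
  ultimately show ?thesis
    unfolding pv_has_value_def by (rule Lim_transform_eventually)
qed

lemma pv_P_fun_ge:
  assumes "n \<ge> 1000"
  shows "\<exists>L. pv_has_value (\<lambda>t. exp (\<i> * complex_of_real (P_fun n t)) / complex_of_real t) L \<and>
     cmod L \<ge> 2 * (sin (1/2) * (ln (1/2) - ln (2 / sqrt (real n))) - ln 5)"
proof -
  have n: "n \<ge> 2" "n \<ge> 20" using assms by auto
  obtain A where A: "((\<lambda>e. integral {e..1} (\<lambda>t. sin (P_fun n t) / t)) \<longlongrightarrow> A) (at_right 0)"
    and "A \<ge> sin (1/2) * (ln (1/2) - ln (2 / sqrt (real n)))"
    using integral_sin_P_over_t_tendsto_at_right_0[OF assms] by auto
  moreover obtain B where B: "((\<lambda>R. integral {1..R} (\<lambda>t. sin (P_fun n t) / t)) \<longlongrightarrow> B) at_top"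
    and "B \<ge> - ln 5"
    using integral_sin_P_over_t_tendsto_at_top[OF n(2)] by auto
  moreover have "2 * (A + B) \<le> cmod (2 * \<i> * complex_of_real (A + B))"
    using abs_ge_self[of "A + B"] by (simp add: norm_mult del: of_real_add)
  ultimately show ?thesis
    using pv_has_value_odd_phase[OF continuous_on_P_fun[OF n(1)] P_fun_minus[OF n(1)] A B]
    by (intro exI[of _ "2 * \<i> * complex_of_real (A + B)"]) auto
qed

section \<open>\<open>P\<^sub>n\<close> is a polynomial\<close>

definition moment :: "nat \<Rightarrow> nat \<Rightarrow> real" where
  "moment n r = integral {-1..1} (\<lambda>x. f_ramp n x * (-x)^r)"

text \<open>Expanding \<open>(1 - (t - x)\<^sup>2/4)^m\<close> binomially twice: the \<open>k\<close>-th term contributes \<open>t^i\<close>, \<open>i \<le> 2k\<close>.\<close>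
definition P_coeff :: "nat \<Rightarrow> nat \<Rightarrow> nat \<Rightarrow> real" where
  "P_coeff n k i = c_const n * of_nat (n^2 choose k) * (-1/4)^k * of_nat (2*k choose i) * moment n (2*k - i)"

definition P_poly :: "nat \<Rightarrow> real poly" where
  "P_poly n = (\<Sum>k\<le>n^2. \<Sum>i\<le>2*k. monom (P_coeff n k i) i)"

lemma one_minus_quarter_square_diff_power_expand:
  fixes t x :: real
  shows "(1 - (t - x)^2/4)^m =
    (\<Sum>k\<le>m. \<Sum>i\<le>2*k. of_nat (m choose k) * (-1/4)^k * of_nat (2*k choose i) * t^i * (-x)^(2*k - i))"
proof -
  have "(1 - (t - x)^2/4)^m = (\<Sum>k\<le>m. of_nat (m choose k) * (-((t-x)^2/4))^k)"
    using binomial_ring[of "-((t-x)^2/4)" 1 m] by simp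
  also have "\<dots> = (\<Sum>k\<le>m. of_nat (m choose k) * (-1/4)^k * (t + (-x))^(2*k))"
  proof (rule sum.cong)
    fix k
    have "(-((t-x)^2/4))^k = ((-1/4) * (t-x)^2)^k" by simp
    then show "of_nat (m choose k) * (-((t-x)^2/4))^k = of_nat (m choose k) * (-1/4)^k * (t + (-x))^(2*k)"
      by (simp only: power_mult_distrib power_mult mult.assoc diff_conv_add_uminus)
  qed simp
  also have "\<dots> = (\<Sum>k\<le>m. of_nat (m choose k) * (-1/4)^k *
      (\<Sum>i\<le>2*k. of_nat (2*k choose i) * t^i * (-x)^(2*k - i)))"
    by (simp only: binomial_ring)
  also have "\<dots> = (\<Sum>k\<le>m. \<Sum>i\<le>2*k. of_nat (m choose k) * (-1/4)^k * of_nat (2*k choose i) * t^i * (-x)^(2*k - i))"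
    by (simp add: sum_distrib_left mult.assoc)
  finally show ?thesis .
qed

lemma P_fun_eq_poly:
  assumes "n \<ge> 2"
  shows "P_fun n t = poly (P_poly n) t"
proof -
  define b where "b k i = c_const n * of_nat (n^2 choose k) * (-1/4)^k * of_nat (2*k choose i) * t^i" for k i
  have expand: "f_ramp n x * phi n (t - x) = (\<Sum>k\<le>n^2. \<Sum>i\<le>2*k. b k i * (f_ramp n x * (-x)^(2*k - i)))" for x
    unfolding phi_def one_minus_quarter_square_diff_power_expand b_def
    by (simp add: sum_distrib_left mult_ac)
  have int: "(\<lambda>x. f_ramp n x * (-x)^r) integrable_on {-1..1}" for r
    by (intro integrable_continuous_real continuous_intros continuous_on_f_ramp)
  have "P_fun n t = integral {-1..1} (\<lambda>x. \<Sum>k\<le>n^2. \<Sum>i\<le>2*k. b k i * (f_ramp n x * (-x)^(2*k - i)))"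
    unfolding P_fun_eq_fconv[OF assms] fconv_def expand ..
  also have "\<dots> = (\<Sum>k\<le>n^2. \<Sum>i\<le>2*k. b k i * moment n (2*k - i))"
    unfolding moment_def using int
    by (simp add: integral_sum integrable_sum integrable_on_mult_right)
  also have "\<dots> = poly (P_poly n) t"
    unfolding P_poly_def poly_sum poly_monom b_def P_coeff_def by (simp add: mult_ac)
  finally show ?thesis .
qed

lemma coeff_P_poly: "coeff (P_poly n) j = (\<Sum>k\<le>n^2. if j \<le> 2*k then P_coeff n k j else 0)"
  unfolding P_poly_def coeff_sum coeff_monom by (rule sum.cong) (auto simp: sum.delta)

lemma moment_eq_integral_0_1:
  "moment n r = integral {0..1} (\<lambda>x. f_ramp n x * (-x)^r + f_ramp n (-x) * x^r)"
  unfolding moment_def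
  by (subst integral_symmetric_interval) (auto intro!: continuous_intros continuous_on_f_ramp)

lemma moment_0: "moment n 0 = 0"
  unfolding moment_eq_integral_0_1 by (simp add: f_ramp_minus)

lemma moment_1_neg:
  assumes "n \<ge> 4"
  shows "moment n 1 < 0"
proof -
  have n: "n \<ge> 2" using assms by simp
  have i: "(\<lambda>x. 2 * x * f_ramp n x) integrable_on {a..b}" for a b
    by (intro integrable_continuous_real continuous_intros continuous_on_f_ramp)
  have "0 < integral {1/2..3/4::real} (\<lambda>x. 1::real)" by simp
  also have "\<dots> \<le> integral {1/2..3/4} (\<lambda>x. 2 * x * f_ramp n x)"
    using f_ramp_eq_1_middle[OF assms] by (intro integral_le i) auto
  also have "\<dots> \<le> integral {0..1} (\<lambda>x. 2 * x * f_ramp n x)"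
    using f_ramp_nonneg[OF n] by (intro integral_subset_le i) auto
  finally show ?thesis
    unfolding moment_eq_integral_0_1 by (simp add: f_ramp_minus algebra_simps integral_neg)
qed

lemma degree_P_poly:
  assumes "n \<ge> 4"
  shows "degree (P_poly n) = 2 * n^2 - 1"
proof -
  let ?m = "n^2"
  have m: "?m \<ge> 1" using assms by simp
  have top: "coeff (P_poly n) j = (if j \<le> 2 * ?m then P_coeff n ?m j else 0)" if "j \<ge> 2 * ?m - 1" for j
  proof -
    have "{..?m} = insert ?m {..<?m}" by auto
    moreover have "(\<Sum>k<?m. if j \<le> 2*k then P_coeff n k j else 0) = 0"
      using that by (intro sum.neutral) auto
    ultimately show ?thesis unfolding coeff_P_poly by simp
  qed
  \<comment> \<open>the coefficient of \<open>t^(2m)\<close> is a multiple of \<open>moment n 0 = 0\<close>, that of \<open>t^(2m-1)\<close> of \<open>moment n 1 \<noteq> 0\<close>\<close>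
  have "coeff (P_poly n) j = 0" if "j > 2 * ?m - 1" for j
    using top[of j] that unfolding P_coeff_def by (cases "j = 2 * ?m") (auto simp: moment_0)
  then have "degree (P_poly n) \<le> 2 * ?m - 1" by (intro degree_le) auto
  moreover have "coeff (P_poly n) (2 * ?m - 1) \<noteq> 0"
  proof -
    have "2 * ?m = Suc (2 * ?m - 1)" using m by simp
    then have "2 * ?m choose (2 * ?m - 1) = 2 * ?m" "2 * ?m - (2 * ?m - 1) = 1"
      by (metis binomial_Suc_n, simp)
    then have "coeff (P_poly n) (2 * ?m - 1) = c_const n * (-1/4)^?m * of_nat (2 * ?m) * moment n 1"
      using top[of "2 * ?m - 1"] unfolding P_coeff_def by simp
    then show ?thesis
      using c_const_bounds(3)[of n] moment_1_neg[OF assms] assms by simp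
  qed
  then have "2 * ?m - 1 \<le> degree (P_poly n)" by (rule le_degree)
  ultimately show ?thesis by simp
qed

lemma log_degree_le_pv_bound:
  fixes s :: real
  assumes s: "s > 0" and n: "n \<ge> 1000"
    and ln_n: "ln (real n) \<ge> (4/3) * (4 * ln 2 + ln 2 / 8 + 2 * ln 5 / s)"
  shows "s / 8 * ln (real (2 * n^2 - 1)) \<le> 2 * (s * (ln (1/2) - ln (2 / sqrt (real n))) - ln 5)"
proof -
  have rn: "real n \<ge> 1000" using n by simp
  have "1 \<le> n^2" "1 \<le> real n ^ 2" using n by simp_all
  then have "0 < real (2 * n^2 - 1)" "real (2 * n^2 - 1) \<le> 2 * real n ^ 2"
    by (auto simp: of_nat_diff)
  then have "ln (real (2 * n^2 - 1)) \<le> ln (2 * real n ^ 2)" by (intro ln_mono)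
  also have "\<dots> = ln 2 + 2 * ln (real n)" using rn by (simp add: ln_mult ln_realpow)
  finally have "s / 8 * ln (real (2 * n^2 - 1)) \<le> s / 8 * (ln 2 + 2 * ln (real n))"
    using s by (intro mult_left_mono) auto
  moreover have "s / 8 * (ln 2 + 2 * ln (real n)) \<le> 2 * (s * (- ln 2 - (ln 2 - ln (real n) / 2)) - ln 5)"
  proof -
    have "s * ((4/3) * (4 * ln 2 + ln 2 / 8 + 2 * ln 5 / s)) \<le> s * ln (real n)"
      using ln_n s by (intro mult_left_mono) auto
    then have "(4/3) * (s * (4 * ln 2) + s * (ln 2 / 8) + 2 * ln 5) \<le> s * ln (real n)"
      using s by (simp add: algebra_simps)
    then show ?thesis by (simp add: algebra_simps)
  qed
  moreover have "ln (2 / sqrt (real n)) = ln 2 - ln (real n) / 2" "ln (1/2::real) = - ln 2"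
    using rn by (simp_all add: ln_div ln_sqrt)
  ultimately show ?thesis by simp
qed

lemma eventually_pv_P_fun_ge_log_degree:
  "\<forall>\<^sub>F n in sequentially. \<exists>L.
     pv_has_value (\<lambda>t. exp (\<i> * complex_of_real (P_fun n t)) / complex_of_real t) L \<and>
     cmod L \<ge> sin (1/2) / 8 * ln (real (2 * n\<^sup>2 - 1))"
proof -
  define s where "s = sin (1/2::real)"
  define X where "X = (4/3) * (4 * ln 2 + ln 2 / 8 + 2 * ln 5 / s)"
  have "s > 0" unfolding s_def using pi_gt3 by (intro sin_gt_zero) auto
  have "filterlim (\<lambda>n. ln (real n)) at_top sequentially"
    by (rule filterlim_compose[OF ln_at_top filterlim_real_sequentially])
  then have "\<forall>\<^sub>F n in sequentially. X \<le> ln (real n)" unfolding filterlim_at_top by (rule spec)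
  with eventually_ge_at_top[of 1000] show ?thesis
  proof eventually_elim
    case (elim n)
    then obtain L where "pv_has_value (\<lambda>t. exp (\<i> * complex_of_real (P_fun n t)) / complex_of_real t) L"
      and "cmod L \<ge> 2 * (s * (ln (1/2) - ln (2 / sqrt (real n))) - ln 5)"
      using pv_P_fun_ge unfolding s_def by blast
    moreover have "s / 8 * ln (real (2 * n^2 - 1)) \<le> 2 * (s * (ln (1/2) - ln (2 / sqrt (real n))) - ln 5)"
      using log_degree_le_pv_bound[OF \<open>s > 0\<close>] elim unfolding X_def by blast
    ultimately show ?case unfolding s_def by auto
  qed
qed

theorem proposition2:
  "\<exists>c > (0::real). \<exists>N::nat. \<forall>n \<ge> N.
     (\<exists>p :: real poly. degree p = 2 * n\<^sup>2 - 1 \<and> (\<forall>t. P_fun n t = poly p t)) \<and>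
     (\<exists>L. pv_has_value (\<lambda>t. exp (\<i> * complex_of_real (P_fun n t)) / complex_of_real t) L \<and>
          cmod L \<ge> c * ln (real (2 * n\<^sup>2 - 1)))"
proof -
  have "sin (1/2::real) / 8 > 0" using pi_gt3 by (intro divide_pos_pos sin_gt_zero) auto
  obtain N where N: "\<And>n. n \<ge> N \<Longrightarrow> n \<ge> 4 \<and> (\<exists>L.
     pv_has_value (\<lambda>t. exp (\<i> * complex_of_real (P_fun n t)) / complex_of_real t) L \<and>
     cmod L \<ge> sin (1/2) / 8 * ln (real (2 * n\<^sup>2 - 1)))"
    using eventually_conj[OF eventually_ge_at_top[of 4] eventually_pv_P_fun_ge_log_degree]
    unfolding eventually_sequentially by blast
  have "\<exists>p :: real poly. degree p = 2 * n\<^sup>2 - 1 \<and> (\<forall>t. P_fun n t = poly p t)" if "n \<ge> N" for n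
    using degree_P_poly[of n] P_fun_eq_poly[of n] N[OF that] by auto
  then have "\<forall>n \<ge> N. (\<exists>p :: real poly. degree p = 2 * n\<^sup>2 - 1 \<and> (\<forall>t. P_fun n t = poly p t)) \<and>
     (\<exists>L. pv_has_value (\<lambda>t. exp (\<i> * complex_of_real (P_fun n t)) / complex_of_real t) L \<and>
          cmod L \<ge> sin (1/2) / 8 * ln (real (2 * n\<^sup>2 - 1)))"
    using N by blast
  with \<open>sin (1/2::real) / 8 > 0\<close> show ?thesis by blast
qed

end
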